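(* For every program $p$, at most one of the following holds: $\mathrm{gvar}(p)$ (i.e. $\mathrm{gvar}_x(p)$ for some variable $x$), $\mathrm{uabs}(p)$, $\mathrm{uinert}(p)$. Moreover: (1) if $\mathrm{gvar}_x(p)$ then $\mathrm{unf}(p)=x$; (2) if $\mathrm{uabs}(p)$ then $\mathrm{unf}(p)$ is a value; (3) if $\mathrm{uinert}(p)$ then $\mathrm{unf}(p)$ is a non-variable inert term.
   Context: Terms $t,u ::= x\mid\lambda x.t\mid t\,u$; values $v ::= \lambda x.t$ (variables are not values); environments $E ::= \epsilon\mid E[x\leftarrow t]$; programs $p ::= (t,E)$, with $x$ bound in $E$ and $u$ in $(u,E[x\leftarrow t])$, up to $\alpha$; appended ES bind fresh variables; $(t,E)@[x\leftarrow u]:=(t,E[x\leftarrow u])$. Inert terms $i ::= x\mid i\,f$, fireballs $f ::= v\mid i$, non-variable inert terms $i^{+} ::= i\,f$. Needed variables: $nv(x)=\{x\}$, $nv(\lambda x.t)=\emptyset$, $nv(tu)=nv(t)\cup nv(u)$; $nv((t,\epsilon))=nv(t)$, $nv((t,E[x\leftarrow u]))=nv((t,E))$ if $x\notin nv((t,E))$, else $(nv((t,E))\setminus\{x\})\cup nv(u)$. Applied variables: $an(\lambda x.t)=an(x)=\emptyset$, $an(tu)=\{x\}\cup an(u)$ if $t=x$ variable, else $an(t)\cup an(u)$; $an((t,\epsilon))=an(t)$; $an((t,E[x\leftarrow u]))$ is $an((t,E))$ if $x\notin nv((t,E))$; $(an((t,E))\setminus\{x\})\cup an(u)$ if $x\in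 nv((t,E))$ and ($x\notin an((t,E))$ or $u$ not a variable); $(an((t,E))\setminus\{x\})\cup\{y\}$ if $x\in nv((t,E))$, $x\in an((t,E))$, $u=y$ variable. Unapplied variables: $un(\lambda x.t)=\emptyset$, $un(x)=\{x\}$, $un(tu)=un(u)$ if $t$ variable, else $un(t)\cup un(u)$; $un((t,\epsilon))=un(t)$; $un((t,E[x\leftarrow u]))$ is $un((t,E))$ if $x\notin un((t,E))$ and ($x\notin nv((t,E))$ or $u$ a variable), and $(un((t,E))\setminus\{x\})\cup un(u)$ if $x\in un((t,E))$ or ($x\in nv((t,E))$ and $u$ not a variable). Predicates, inductively. $\mathrm{gvar}_x((x,\epsilon))$; $\mathrm{gvar}_x(p)\Rightarrow\mathrm{gvar}_y(p@[x\leftarrow y])$; $\mathrm{gvar}_x(p)$, $z\neq x$ $\Rightarrow$ $\mathrm{gvar}_x(p@[z\leftarrow t])$. $\mathrm{uabs}((v,\epsilon))$; $\mathrm{gvar}_x(p)\Rightarrow\mathrm{uabs}(p@[x\leftarrow v])$; $\mathrm{uabs}(p)\Rightarrow\mathrm{uabs}(p@[x\leftarrow t])$. $\mathrm{uinert}((i^{+},\epsilon))$; $\mathrm{gvar}_x(p)\Rightarrow\mathrm{uinert}(p@[x\leftarrow i^{+}])$; $\mathrm{uinert}(p)$, $x\in nv(p)$ $\Rightarrow$ $\mathrm{uinert}(p@[x\leftarrow i])$; $\mathrm{uinert}(p)$, $x\in un(p)$, $x\notin an(p)$ $\Rightarrow$ $\mathrm{uinert}(p@[x\leftarrow v])$;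 $\mathrm{uinert}(p)$, $x\notin nv(p)$ $\Rightarrow$ $\mathrm{uinert}(p@[x\leftarrow t])$. Unfolding: $\mathrm{unf}((t,\epsilon)):=t$, $\mathrm{unf}((t,E[x\leftarrow u])):=\mathrm{unf}((t,E))\{x:=u\}$ (capture-avoiding meta-level substitution). *)

theory Defs
  imports Main
begin

datatype trm = Var nat | Lam nat trm | App trm trm

type_synonym var = nat

text \<open>Environments: the HEAD of the list is the LAST (outermost) explicit substitution,
  i.e. the paper's E[x<-t] is represented as (x,t) # E.\<close>
type_synonym env = "(var \<times> trm) list"
type_synonym prog = "trm \<times> env"

definition app_es :: "prog \<Rightarrow> var \<Rightarrow> trm \<Rightarrow> prog" where
  "app_es p x u = (fst p, (x, u) # snd p)"

definition is_val :: "trm \<Rightarrow> bool" where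
  "is_val t \<longleftrightarrow> (\<exists>x b. t = Lam x b)"

definition is_var :: "trm \<Rightarrow> bool" where
  "is_var t \<longleftrightarrow> (\<exists>x. t = Var x)"

inductive inert :: "trm \<Rightarrow> bool" where
  inert_var: "inert (Var x)"
| inert_app: "inert i \<Longrightarrow> is_val f \<or> inert f \<Longrightarrow> inert (App i f)"

definition fireball :: "trm \<Rightarrow> bool" where
  "fireball f \<longleftrightarrow> is_val f \<or> inert f"

text \<open>Non-variable inert terms i+ ::= i f.\<close>
definition inert_plus :: "trm \<Rightarrow> bool" where
  "inert_plus t \<longleftrightarrow> (\<exists>i f. t = App i f \<and> inert i \<and> fireball f)"

primrec fv :: "trm \<Rightarrow> var set" where
  "fv (Var x) = {x}"
| "fv (Lam x t) = fv t - {x}"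
| "fv (App t u) = fv t \<union> fv u"

primrec bv :: "trm \<Rightarrow> var set" where
  "bv (Var x) = {}"
| "bv (Lam x t) = insert x (bv t)"
| "bv (App t u) = bv t \<union> bv u"

primrec vars :: "trm \<Rightarrow> var set" where
  "vars (Var x) = {x}"
| "vars (Lam x t) = insert x (vars t)"
| "vars (App t u) = vars t \<union> vars u"

definition swapv :: "var \<Rightarrow> var \<Rightarrow> var \<Rightarrow> var" where
  "swapv a b z = (if z = a then b else if z = b then a else z)"

primrec perm :: "var \<Rightarrow> var \<Rightarrow> trm \<Rightarrow> trm" where
  "perm a b (Var z) = Var (swapv a b z)"
| "perm a b (Lam z t) = Lam (swapv a b z) (perm a b t)"
| "perm a b (App t u) = App (perm a b t) (perm a b u)"

lemma size_perm[simp]: "size (perm a b t) = size t"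
  by (induction t) auto

definition fresh_for :: "var set \<Rightarrow> var" where
  "fresh_for S = (SOME z. z \<notin> S)"

function subst :: "trm \<Rightarrow> var \<Rightarrow> trm \<Rightarrow> trm" where
  "subst (Var y) x u = (if y = x then u else Var y)"
| "subst (App t1 t2) x u = App (subst t1 x u) (subst t2 x u)"
| "subst (Lam y t) x u =
     (if y = x then Lam y t
      else if y \<notin> fv u then Lam y (subst t x u)
      else (let z = fresh_for (vars t \<union> fv u \<union> {x, y})
            in Lam z (subst (perm y z t) x u)))"
  by pat_completeness auto
termination
  by (relation "measure (\<lambda>(t, x, u). size t)") auto

fun bvp :: "prog \<Rightarrow> var set" where
  "bvp (t, []) = bv t"
| "bvp (t, (x, u) # E) = insert x (bv u \<union> bvp (t, E))"

text \<open>Appended explicit substitutions bind fresh variables.\<close>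
definition fresh :: "var \<Rightarrow> prog \<Rightarrow> bool" where
  "fresh x p \<longleftrightarrow> x \<notin> bvp p"

fun unf :: "prog \<Rightarrow> trm" where
  "unf (t, []) = t"
| "unf (t, (x, u) # E) = subst (unf (t, E)) x u"

primrec nv :: "trm \<Rightarrow> var set" where
  "nv (Var x) = {x}"
| "nv (Lam x t) = {}"
| "nv (App t u) = nv t \<union> nv u"

fun nvp :: "prog \<Rightarrow> var set" where
  "nvp (t, []) = nv t"
| "nvp (t, (x, u) # E) =
     (if x \<notin> nvp (t, E) then nvp (t, E) else (nvp (t, E) - {x}) \<union> nv u)"

fun an :: "trm \<Rightarrow> var set" where
  "an (Var x) = {}"
| "an (Lam x t) = {}"
| "an (App (Var x) u) = insert x (an u)"
| "an (App t u) = an t \<union> an u"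

fun anp :: "prog \<Rightarrow> var set" where
  "anp (t, []) = an t"
| "anp (t, (x, u) # E) =
     (if x \<notin> nvp (t, E) then anp (t, E)
      else if x \<notin> anp (t, E) \<or> \<not> is_var u then (anp (t, E) - {x}) \<union> an u
      else (anp (t, E) - {x}) \<union> {THE y. u = Var y})"

fun un :: "trm \<Rightarrow> var set" where
  "un (Var x) = {x}"
| "un (Lam x t) = {}"
| "un (App (Var x) u) = un u"
| "un (App t u) = un t \<union> un u"

fun unp :: "prog \<Rightarrow> var set" where
  "unp (t, []) = un t"
| "unp (t, (x, u) # E) =
     (if x \<notin> unp (t, E) \<and> (x \<notin> nvp (t, E) \<or> is_var u) then unp (t, E)
      else (unp (t, E) - {x}) \<union> un u)"

inductive gvar :: "var \<Rightarrow> prog \<Rightarrow> bool" where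
  gvar_base: "gvar x (Var x, [])"
| gvar_ren: "gvar x p \<Longrightarrow> fresh x p \<Longrightarrow> gvar y (app_es p x (Var y))"
| gvar_skip: "gvar x p \<Longrightarrow> z \<noteq> x \<Longrightarrow> fresh z p \<Longrightarrow> gvar x (app_es p z t)"

inductive uabs :: "prog \<Rightarrow> bool" where
  uabs_base: "is_val v \<Longrightarrow> uabs (v, [])"
| uabs_gvar: "gvar x p \<Longrightarrow> is_val v \<Longrightarrow> fresh x p \<Longrightarrow> uabs (app_es p x v)"
| uabs_skip: "uabs p \<Longrightarrow> fresh x p \<Longrightarrow> uabs (app_es p x t)"

inductive uinert :: "prog \<Rightarrow> bool" where
  uinert_base: "inert_plus i \<Longrightarrow> uinert (i, [])"
| uinert_gvar: "gvar x p \<Longrightarrow> inert_plus i \<Longrightarrow> fresh x p \<Longrightarrow> uinert (app_es p x i)"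
| uinert_inert: "uinert p \<Longrightarrow> x \<in> nvp p \<Longrightarrow> inert i \<Longrightarrow> fresh x p \<Longrightarrow> uinert (app_es p x i)"
| uinert_val: "uinert p \<Longrightarrow> x \<in> unp p \<Longrightarrow> x \<notin> anp p \<Longrightarrow> is_val v \<Longrightarrow> fresh x p
     \<Longrightarrow> uinert (app_es p x v)"
| uinert_skip: "uinert p \<Longrightarrow> x \<notin> nvp p \<Longrightarrow> fresh x p \<Longrightarrow> uinert (app_es p x t)"

end

theory Submission
  imports Defs
begin

text \<open>Each of the three predicates is preserved along the explicit substitutions as an invariant
  on the shape of the unfolding: a variable, an abstraction, a non-variable inert term. The
  side conditions on needed and applied variables are conditions on the unfolding, because
  nvp and anp compute exactly nv and an of it. The three shapes have distinct head
  constructors, which gives mutual exclusion.\<close>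

lemma is_val_subst: "is_val v \<Longrightarrow> is_val (subst v x u)"
  by (auto simp: is_val_def Let_def)

lemma nv_subst: "nv (subst s x u) = (if x \<in> nv s then (nv s - {x}) \<union> nv u else nv s)"
  by (induction s) (auto simp: Let_def)

lemma an_subset_nv: "an s \<subseteq> nv s"
  by (induction s rule: an.induct) auto

lemma an_App: "an (App t w) = (if is_var t then nv t else an t) \<union> an w"
  by (cases t) (auto simp: is_var_def)

lemma an_subst:
  "an (subst s x u) =
    (if x \<notin> nv s then an s
     else if x \<notin> an s \<or> \<not> is_var u then (an s - {x}) \<union> an u
     else (an s - {x}) \<union> {THE y. u = Var y})"
proof (induction s)
  case (Var y)
  then show ?case by auto
next
  case (Lam y t)
  then show ?case using is_val_subst[of "Lam y t" x u] by (auto simp: is_val_def)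
next
  case (App s1 s2)
  have "is_var (subst s1 x u) \<longleftrightarrow> (if s1 = Var x then is_var u else is_var s1)"
    by (cases s1) (auto simp: is_var_def Let_def)
  then show ?case
    using App an_subset_nv[of s1] an_subset_nv[of s2]
    by (auto simp: an_App nv_subst is_var_def split: if_splits)
qed

lemma nvp_eq_nv_unf: "nvp p = nv (unf p)"
proof (cases p)
  case (Pair t E)
  then show ?thesis by (induction E arbitrary: p) (auto simp: nv_subst)
qed

lemma anp_eq_an_unf: "anp p = an (unf p)"
proof (cases p)
  case (Pair t E)
  then show ?thesis by (induction E arbitrary: p) (auto simp: an_subst nv_subst nvp_eq_nv_unf)
qed

lemma unf_app_es: "unf (app_es p x u) = subst (unf p) x u"
  by (cases p) (simp add: app_es_def)

lemma inert_plus_iff: "inert_plus t \<longleftrightarrow> inert t \<and> (\<exists>a b. t = App a b)"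
  by (auto simp: inert_plus_def fireball_def elim: inert.cases intro: inert.intros)

lemma inert_plus_subst:
  assumes "inert_plus s" and "fireball (subst s x u)"
  shows "inert_plus (subst s x u)"
  using assms by (auto simp: inert_plus_iff fireball_def is_val_def)

lemma inert_subst_inert: "inert s \<Longrightarrow> inert i \<Longrightarrow> inert (subst s x i)"
  by (induction rule: inert.induct) (auto intro: inert.intros is_val_subst)

lemma inert_subst_not_needed: "inert s \<Longrightarrow> x \<notin> nv s \<Longrightarrow> inert (subst s x t)"
  by (induction rule: inert.induct) (auto intro: inert.intros is_val_subst)

lemma fireball_subst_val_not_applied:
  "inert s \<Longrightarrow> x \<notin> an s \<Longrightarrow> is_val v \<Longrightarrow> fireball (subst s x v)"
proof (induction rule: inert.induct)
  case (inert_var y)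
  then show ?case by (auto simp: fireball_def intro: inert.intros)
next
  case (inert_app i f)
  have head: "inert (subst i x v)"
  proof (cases i)
    case (Var y)
    with inert_app.prems have "y \<noteq> x" by simp
    with Var show ?thesis by (auto intro: inert.intros)
  next
    case (App i1 i2)
    with inert_app have "fireball (subst i x v)" by (auto simp: an_App is_var_def)
    with App show ?thesis by (auto simp: fireball_def is_val_def)
  qed (use inert_app.hyps in \<open>auto elim: inert.cases\<close>)
  have "fireball (subst f x v)"
    using inert_app is_val_subst by (auto simp: fireball_def an_App)
  with head show ?case by (auto simp: fireball_def intro: inert.intros)
qed

lemma gvar_unf_eq_Var: "gvar x p \<Longrightarrow> unf p = Var x"
  by (induction rule: gvar.induct) (auto simp: unf_app_es)

lemma uabs_unf_is_val: "uabs p \<Longrightarrow> is_val (unf p)"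
  by (induction rule: uabs.induct) (auto simp: unf_app_es gvar_unf_eq_Var is_val_subst)

lemma uinert_unf_inert_plus: "uinert p \<Longrightarrow> inert_plus (unf p)"
proof (induction rule: uinert.induct)
  case (uinert_base i)
  then show ?case by simp
next
  case (uinert_gvar x p i)
  then show ?case by (simp add: unf_app_es gvar_unf_eq_Var)
next
  case (uinert_inert p x i)
  then have "inert (subst (unf p) x i)"
    by (simp add: inert_plus_iff inert_subst_inert)
  with uinert_inert.IH show ?case by (simp add: unf_app_es inert_plus_subst fireball_def)
next
  case (uinert_val p x v)
  \<comment> \<open>Only x \<notin> anp p matters.\<close>
  then have "fireball (subst (unf p) x v)"
    by (simp add: anp_eq_an_unf inert_plus_iff fireball_subst_val_not_applied)
  with uinert_val.IH show ?case by (simp add: unf_app_es inert_plus_subst)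
next
  case (uinert_skip p x t)
  then have "inert (subst (unf p) x t)"
    by (simp add: nvp_eq_nv_unf inert_plus_iff inert_subst_not_needed)
  with uinert_skip.IH show ?case by (simp add: unf_app_es inert_plus_subst fireball_def)
qed

theorem mainTheorem7:
  fixes p :: prog
  shows "\<not> ((\<exists>x. gvar x p) \<and> uabs p) \<and> \<not> ((\<exists>x. gvar x p) \<and> uinert p) \<and> \<not> (uabs p \<and> uinert p)
    \<and> (\<forall>x. gvar x p \<longrightarrow> unf p = Var x)
    \<and> (uabs p \<longrightarrow> is_val (unf p))
    \<and> (uinert p \<longrightarrow> inert_plus (unf p))"
proof -
  have "\<not> is_val (Var x)" "\<not> inert_plus (Var x)" "\<not> (is_val t \<and> inert_plus t)" for x t
    by (auto simp: is_val_def inert_plus_def)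
  then show ?thesis
    using gvar_unf_eq_Var uabs_unf_is_val uinert_unf_inert_plus by metis
qed

end
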